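(* For $n\ge2$, $$a_n=\sum_{\substack{k\ge1,\ x_1,\dots,x_k\ge1\\ x_1+\cdots+x_k=n-1}} s_{x_1+1}\,s_{x_2+1}\cdots s_{x_k+1},$$ the sum being over all compositions $(x_1,\dots,x_k)$ of $n-1$ into positive parts.
   Context: $a_n=|\mathcal A_n|$ and $s_n$ is the number of simple permutations in $\mathcal A_n$. Here $\mathcal A_{n}$ is the set of permutations $w\in S_{n}$ (one-line notation $w_1\cdots w_n$) avoiding all six vincular patterns below, where $w$ contains - $\underline{32}\,\underline{41}$ if there are $i,j$ with $i+2\le j\le n-1$ and $w_{j+1}<w_{i+1}<w_i<w_j$; - $\underline{14}\,\underline{23}$ if there are such $i,j$ with $w_i<w_j<w_{j+1}<w_{i+1}$; - $\underline{41}\,\underline{32}$ if there are such $i,j$ with $w_{i+1}<w_{j+1}<w_j<w_i$; - $\underline{23}\,\underline{14}$ if there are such $i,j$ with $w_j<w_i<w_{i+1}<w_{j+1}$; - $\underline{23}\,\underline{1}$ if there is $i$ with $i+1\le n-1$ and $w_n<w_i<w_{i+1}$; - $\underline{1}\,\underline{32}$ if there is $j$ with $2\le j\le n-1$ and $w_1<w_{j+1}<w_j$. A permutation $\pi\in S_n$ is simple if there is no interval of positions $\{i,\dots,j\}$ with $2\le j-i+1\le n-1$ such that $\{\pi_i,\dots,\pi_j\}$ is a set of consecutive integers. *)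

theory Defs
  imports "HOL-Combinatorics.Multiset_Permutations"
begin

text \<open>Permutations of [n] in one-line notation are lists w with w ! (i-1) = w_i.\<close>

definition ent :: "nat list \<Rightarrow> nat \<Rightarrow> nat" where
  "ent w i = w ! (i - 1)"

definition contains_3241 :: "nat list \<Rightarrow> bool" where
  "contains_3241 w \<longleftrightarrow> (\<exists>i j. 1 \<le> i \<and> i + 2 \<le> j \<and> j \<le> length w - 1 \<and>
     ent w (j+1) < ent w (i+1) \<and> ent w (i+1) < ent w i \<and> ent w i < ent w j)"

definition contains_1423 :: "nat list \<Rightarrow> bool" where
  "contains_1423 w \<longleftrightarrow> (\<exists>i j. 1 \<le> i \<and> i + 2 \<le> j \<and> j \<le> length w - 1 \<and>
     ent w i < ent w j \<and> ent w j < ent w (j+1) \<and> ent w (j+1) < ent w (i+1))"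

definition contains_4132 :: "nat list \<Rightarrow> bool" where
  "contains_4132 w \<longleftrightarrow> (\<exists>i j. 1 \<le> i \<and> i + 2 \<le> j \<and> j \<le> length w - 1 \<and>
     ent w (i+1) < ent w (j+1) \<and> ent w (j+1) < ent w j \<and> ent w j < ent w i)"

definition contains_2314 :: "nat list \<Rightarrow> bool" where
  "contains_2314 w \<longleftrightarrow> (\<exists>i j. 1 \<le> i \<and> i + 2 \<le> j \<and> j \<le> length w - 1 \<and>
     ent w j < ent w i \<and> ent w i < ent w (i+1) \<and> ent w (i+1) < ent w (j+1))"

definition contains_231 :: "nat list \<Rightarrow> bool" where
  "contains_231 w \<longleftrightarrow> (\<exists>i. 1 \<le> i \<and> i + 1 \<le> length w - 1 \<and>
     ent w (length w) < ent w i \<and> ent w i < ent w (i+1))"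

definition contains_132 :: "nat list \<Rightarrow> bool" where
  "contains_132 w \<longleftrightarrow> (\<exists>j. 2 \<le> j \<and> j \<le> length w - 1 \<and>
     ent w 1 < ent w (j+1) \<and> ent w (j+1) < ent w j)"

definition avoids_all :: "nat list \<Rightarrow> bool" where
  "avoids_all w \<longleftrightarrow> \<not> contains_3241 w \<and> \<not> contains_1423 w \<and> \<not> contains_4132 w \<and>
     \<not> contains_2314 w \<and> \<not> contains_231 w \<and> \<not> contains_132 w"

definition A_set :: "nat \<Rightarrow> nat list set" where
  "A_set n = {w \<in> permutations_of_set {1..n}. avoids_all w}"

definition is_simple :: "nat list \<Rightarrow> bool" where
  "is_simple w \<longleftrightarrow> \<not> (\<exists>i j. 1 \<le> i \<and> j \<le> length w \<and> 2 \<le> j - i + 1 \<and> j - i + 1 \<le> length w - 1 \<and>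
      (\<exists>m. ent w ` {i..j} = {m..<m + (j - i + 1)}))"

definition a_seq :: "nat \<Rightarrow> nat" where
  "a_seq n = card (A_set n)"

definition s_seq :: "nat \<Rightarrow> nat" where
  "s_seq n = card {w \<in> A_set n. is_simple w}"

definition compositions :: "nat \<Rightarrow> nat list set" where
  "compositions m = {xs. xs \<noteq> [] \<and> (\<forall>x\<in>set xs. 1 \<le> x) \<and> sum_list xs = m}"

end

theory Submission
  imports Defs
begin

(* Take the largest m < n such that the values 1..m of w in A_n occupy consecutive positions.
   Collapsing that factor tau to a single entry 1 leaves a permutation sigma of size k = n + 1 - m,
   and w is sigma with its entry 1 inflated by tau. The six patterns are compatible with this
   operation: w avoids them iff sigma and tau do. Moreover sigma is simple, because an avoider with
   a proper interval always has one containing the value 1, and such an interval of sigma would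
   give w a larger such block. Conversely the inflation of the 1 of a simple sigma recovers m, so
   we get a bijection and a_n = sum_{k=2..n} s_k a_{n+1-k} with a_1 = 1, which unfolds to the sum
   over the compositions of n - 1. *)

section \<open>The patterns in zero-based indexing\<close>

(* w!i is the entry w_(i+1) of Defs; nested_pattern a b c d says that a b c d is order-isomorphic
   to 3241, 1423, 4132 or 2314, i.e. one adjacent pair nests inside the other, in the same direction. *)
definition nested_pattern :: "nat \<Rightarrow> nat \<Rightarrow> nat \<Rightarrow> nat \<Rightarrow> bool" where
  "nested_pattern a b c d \<longleftrightarrow>
     (d < b \<and> b < a \<and> a < c) \<or> (a < c \<and> c < d \<and> d < b) \<or>
     (b < d \<and> d < c \<and> c < a) \<or> (c < a \<and> a < b \<and> b < d)"

definition avoids_quad :: "nat list \<Rightarrow> bool" where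
  "avoids_quad w \<longleftrightarrow> (\<forall>i j. i + 2 \<le> j \<longrightarrow> j + 1 < length w \<longrightarrow>
     \<not> nested_pattern (w!i) (w!(i+1)) (w!j) (w!(j+1)))"

definition avoids_231_end :: "nat list \<Rightarrow> bool" where
  "avoids_231_end w \<longleftrightarrow> (\<forall>i. i + 2 < length w \<longrightarrow> \<not> (w!(length w - 1) < w!i \<and> w!i < w!(i+1)))"

definition avoids_132_start :: "nat list \<Rightarrow> bool" where
  "avoids_132_start w \<longleftrightarrow> (\<forall>j. 1 \<le> j \<longrightarrow> j + 1 < length w \<longrightarrow> \<not> (w!0 < w!(j+1) \<and> w!(j+1) < w!j))"

definition avoids_patterns :: "nat list \<Rightarrow> bool" where
  "avoids_patterns w \<longleftrightarrow> avoids_quad w \<and> avoids_231_end w \<and> avoids_132_start w"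

lemma contains_quad_iff:
  "contains_3241 w \<or> contains_1423 w \<or> contains_4132 w \<or> contains_2314 w \<longleftrightarrow> \<not> avoids_quad w"
proof
  assume "contains_3241 w \<or> contains_1423 w \<or> contains_4132 w \<or> contains_2314 w"
  then obtain i j where "1 \<le> i" "i + 2 \<le> j" "j \<le> length w - 1"
    "nested_pattern (ent w i) (ent w (i+1)) (ent w j) (ent w (j+1))"
    unfolding contains_3241_def contains_1423_def contains_4132_def contains_2314_def
      nested_pattern_def by blast
  then show "\<not> avoids_quad w"
    unfolding avoids_quad_def ent_def
    by (intro notI, elim allE[of _ "i - 1"] allE[of _ "j - 1"]) (auto simp: Suc_diff_le)
next
  assume "\<not> avoids_quad w"
  then obtain i j where "i + 2 \<le> j" "j + 1 < length w"
    "nested_pattern (ent w (i+1)) (ent w (i+1+1)) (ent w (j+1)) (ent w (j+1+1))"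
    unfolding avoids_quad_def ent_def by auto
  moreover have "1 \<le> i + 1" "i + 1 + 2 \<le> j + 1" "j + 1 \<le> length w - 1"
    using calculation by auto
  ultimately show "contains_3241 w \<or> contains_1423 w \<or> contains_4132 w \<or> contains_2314 w"
    unfolding contains_3241_def contains_1423_def contains_4132_def contains_2314_def
      nested_pattern_def by blast
qed

lemma contains_231_iff: "contains_231 w \<longleftrightarrow> \<not> avoids_231_end w"
proof
  assume "contains_231 w"
  then obtain i where "1 \<le> i" "i + 1 \<le> length w - 1"
    "ent w (length w) < ent w i" "ent w i < ent w (i+1)"
    unfolding contains_231_def by blast
  then show "\<not> avoids_231_end w"
    unfolding avoids_231_end_def ent_def by (auto intro!: exI[of _ "i - 1"])
next
  assume "\<not> avoids_231_end w"
  then obtain i where "i + 2 < length w" "w!(length w - 1) < w!i" "w!i < w!(i+1)"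
    unfolding avoids_231_end_def by blast
  then show "contains_231 w"
    unfolding contains_231_def ent_def by (intro exI[of _ "i + 1"]) simp
qed

lemma contains_132_iff: "contains_132 w \<longleftrightarrow> \<not> avoids_132_start w"
proof
  assume "contains_132 w"
  then obtain j where "2 \<le> j" "j \<le> length w - 1" "ent w 1 < ent w (j+1)" "ent w (j+1) < ent w j"
    unfolding contains_132_def by blast
  then show "\<not> avoids_132_start w"
    unfolding avoids_132_start_def ent_def by (auto intro!: exI[of _ "j - 1"])
next
  assume "\<not> avoids_132_start w"
  then obtain j where "1 \<le> j" "j + 1 < length w" "w!0 < w!(j+1)" "w!(j+1) < w!j"
    unfolding avoids_132_start_def by blast
  then show "contains_132 w"
    unfolding contains_132_def ent_def by (intro exI[of _ "j + 1"]) simp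
qed

lemma avoids_all_iff_avoids_patterns: "avoids_all w \<longleftrightarrow> avoids_patterns w"
  unfolding avoids_all_def avoids_patterns_def
  using contains_quad_iff contains_231_iff contains_132_iff by blast

lemma nested_pattern_rev: "nested_pattern d c b a \<longleftrightarrow> nested_pattern a b c d"
  unfolding nested_pattern_def by blast

lemma avoids_quad_rev_imp:
  assumes "avoids_quad w" shows "avoids_quad (rev w)"
  unfolding avoids_quad_def
proof (intro allI impI notI)
  fix i j assume ij: "i + 2 \<le> j" "j + 1 < length (rev w)"
    and pat: "nested_pattern (rev w!i) (rev w!(i+1)) (rev w!j) (rev w!(j+1))"
  define i' j' where "i' = length w - 2 - j" and "j' = length w - 2 - i"
  have "rev w!i = w!(j'+1)" "rev w!(i+1) = w!j'" "rev w!j = w!(i'+1)" "rev w!(j+1) = w!i'"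
    using ij by (auto simp: rev_nth i'_def j'_def Suc_diff_Suc numeral_2_eq_2)
  then have "nested_pattern (w!i') (w!(i'+1)) (w!j') (w!(j'+1))"
    using pat nested_pattern_rev by metis
  moreover have "i' + 2 \<le> j'" "j' + 1 < length w" using ij by (auto simp: i'_def j'_def)
  ultimately show False using assms unfolding avoids_quad_def by blast
qed

lemma avoids_quad_rev [simp]: "avoids_quad (rev w) \<longleftrightarrow> avoids_quad w"
  using avoids_quad_rev_imp[of w] avoids_quad_rev_imp[of "rev w"] by auto

lemma avoids_231_end_rev [simp]: "avoids_231_end (rev w) \<longleftrightarrow> avoids_132_start w"
proof -
  have "avoids_231_end (rev w) \<longleftrightarrow>
      (\<forall>i. i + 2 < length w \<longrightarrow> \<not> (w!0 < w!(length w - 1 - i) \<and> w!(length w - 1 - i) < w!(length w - 2 - i)))"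
    unfolding avoids_231_end_def by (auto simp: rev_nth Suc_diff_Suc numeral_2_eq_2 hd_conv_nth)
  also have "\<dots> \<longleftrightarrow> avoids_132_start w"
    unfolding avoids_132_start_def
  proof (intro iffI allI impI)
    fix j assume "\<forall>i. i + 2 < length w \<longrightarrow> \<not> (w!0 < w!(length w - 1 - i) \<and> w!(length w - 1 - i) < w!(length w - 2 - i))"
      "1 \<le> j" "j + 1 < length w"
    then show "\<not> (w!0 < w!(j+1) \<and> w!(j+1) < w!j)"
      by (auto dest!: spec[of _ "length w - 2 - j"] simp: Suc_diff_Suc numeral_2_eq_2)
  next
    fix i assume "\<forall>j. 1 \<le> j \<longrightarrow> j + 1 < length w \<longrightarrow> \<not> (w!0 < w!(j+1) \<and> w!(j+1) < w!j)"
      "i + 2 < length w"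
    then show "\<not> (w!0 < w!(length w - 1 - i) \<and> w!(length w - 1 - i) < w!(length w - 2 - i))"
      by (auto dest!: spec[of _ "length w - 2 - i"] simp: Suc_diff_Suc numeral_2_eq_2)
  qed
  finally show ?thesis .
qed

lemma avoids_patterns_rev [simp]: "avoids_patterns (rev w) \<longleftrightarrow> avoids_patterns w"
  unfolding avoids_patterns_def
  using avoids_quad_rev avoids_231_end_rev[of w] avoids_231_end_rev[of "rev w"] by auto

definition proper_interval :: "nat list \<Rightarrow> nat \<Rightarrow> nat \<Rightarrow> bool" where
  "proper_interval w a b \<longleftrightarrow> a < b \<and> b < length w \<and> b - a + 1 < length w \<and>
     (\<exists>c. (!) w ` {a..b} = {c..<c + (b - a + 1)})"

lemma is_simple_iff: "is_simple w \<longleftrightarrow> (\<nexists>a b. proper_interval w a b)"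
proof -
  have shift: "ent w ` {a+1..b+1} = (!) w ` {a..b}" for a b
    by (simp only: Suc_eq_plus1[symmetric] image_Suc_atLeastAtMost[symmetric] image_image)
      (simp add: ent_def)
  have "(\<exists>i j. 1 \<le> i \<and> j \<le> length w \<and> 2 \<le> j - i + 1 \<and> j - i + 1 \<le> length w - 1 \<and>
      (\<exists>c. ent w ` {i..j} = {c..<c + (j - i + 1)})) \<longleftrightarrow> (\<exists>a b. proper_interval w a b)"
  proof
    assume "\<exists>i j. 1 \<le> i \<and> j \<le> length w \<and> 2 \<le> j - i + 1 \<and> j - i + 1 \<le> length w - 1 \<and>
      (\<exists>c. ent w ` {i..j} = {c..<c + (j - i + 1)})"
    then obtain i j c where "1 \<le> i" "j \<le> length w" "2 \<le> j - i + 1" "j - i + 1 \<le> length w - 1"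
      "ent w ` {i - 1 + 1..j - 1 + 1} = {c..<c + (j - 1 - (i - 1) + 1)}" by auto
    then have "proper_interval w (i - 1) (j - 1)"
      unfolding proper_interval_def shift by auto
    then show "\<exists>a b. proper_interval w a b" by blast
  next
    assume "\<exists>a b. proper_interval w a b"
    then obtain a b c where "a < b" "b < length w" "b - a + 1 < length w"
      "ent w ` {a+1..b+1} = {c..<c + (b + 1 - (a + 1) + 1)}"
      unfolding proper_interval_def shift by auto
    then show "\<exists>i j. 1 \<le> i \<and> j \<le> length w \<and> 2 \<le> j - i + 1 \<and> j - i + 1 \<le> length w - 1 \<and>
      (\<exists>c. ent w ` {i..j} = {c..<c + (j - i + 1)})"
      by (intro exI[of _ "a + 1"] exI[of _ "b + 1"]) auto
  qed
  then show ?thesis unfolding is_simple_def by blast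
qed

lemma image_nth_rev:
  assumes "a \<le> b" "b < length w"
  shows "(!) (rev w) ` {length w - 1 - b..length w - 1 - a} = (!) w ` {a..b}"
proof -
  have "{length w - 1 - b..length w - 1 - a} = (\<lambda>i. length w - 1 - i) ` {a..b}"
  proof (intro equalityI subsetI)
    fix x assume "x \<in> {length w - 1 - b..length w - 1 - a}"
    then have "length w - 1 - x \<in> {a..b}" "x = length w - 1 - (length w - 1 - x)" using assms by auto
    then show "x \<in> (\<lambda>i. length w - 1 - i) ` {a..b}" by blast
  qed (use assms in auto)
  also have "(!) (rev w) ` \<dots> = (!) w ` {a..b}"
    unfolding image_image using assms by (intro image_cong) (auto simp: rev_nth)
  finally show ?thesis .
qed

lemma proper_interval_rev:
  assumes "proper_interval w a b"
  shows "proper_interval (rev w) (length w - 1 - b) (length w - 1 - a)"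
  using assms image_nth_rev[of a b w] unfolding proper_interval_def by auto

lemma proper_intervalI:
  assumes "distinct w" "a < b" "b < length w" "b - a + 1 < length w" "(!) w ` {a..b} = {c..d}"
  shows "proper_interval w a b"
proof -
  have "card ((!) w ` {a..b}) = b - a + 1"
    using assms by (subst card_image) (auto intro: inj_on_nth)
  then have "{c..d} = {c..<c + (b - a + 1)}" using assms(5) by auto
  then show ?thesis using assms unfolding proper_interval_def by auto
qed

lemma proper_interval_around_one_values:
  assumes distinct: "distinct w" and pos: "\<forall>y\<in>set w. 1 \<le> y"
    and interval: "proper_interval w a b" and one: "1 \<in> (!) w ` {a..b}" and x: "x < length w"
  shows "w!x \<le> b - a + 1 \<longleftrightarrow> a \<le> x \<and> x \<le> b"
proof -
  obtain c where ab: "a < b" "b < length w" and img: "(!) w ` {a..b} = {c..<c + (b - a + 1)}"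
    using interval unfolding proper_interval_def by blast
  have "c \<in> (!) w ` {a..b}" unfolding img by simp
  then have "1 \<le> c" using pos ab by auto
  moreover have "c \<le> 1" using one img by auto
  ultimately have img1: "(!) w ` {a..b} = {1..b - a + 1}" using img by auto
  show ?thesis
  proof
    assume "w!x \<le> b - a + 1"
    then have "w!x \<in> (!) w ` {a..b}" using img1 pos x by auto
    then show "a \<le> x \<and> x \<le> b" using distinct x ab by (auto simp: nth_eq_iff_index_eq)
  qed (use img1 in auto)
qed

section \<open>Proper intervals around the value 1\<close>

lemma nat_crossing:
  assumes "P a" "\<not> P b" "a \<le> b"
  shows "\<exists>i. a \<le> i \<and> i < b \<and> P i \<and> \<not> P (Suc i)"
  using assms
proof (induction b)
  case (Suc b)
  then have "a \<le> b" using le_Suc_eq by auto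
  then show ?case using Suc by (cases "P b") (auto intro: less_SucI)
qed simp

lemma proper_interval_of_convex_sublevel:
  fixes s :: "nat list"
  assumes distinct: "distinct s" and perm: "set s = {1..length s}" and d: "2 \<le> d" "d < length s"
    and convex: "\<And>x y z. x < y \<Longrightarrow> y < z \<Longrightarrow> z < length s \<Longrightarrow> s!x \<le> d \<Longrightarrow> s!z \<le> d \<Longrightarrow> s!y \<le> d"
  shows "\<exists>a b. proper_interval s a b \<and> 1 \<in> (!) s ` {a..b}"
proof -
  define X where "X = {x. x < length s \<and> s!x \<le> d}"
  have img: "(!) s ` X = {1..d}"
  proof (intro equalityI subsetI)
    fix z assume "z \<in> {1..d}"
    then have "z \<in> set s" using perm d by auto
    then obtain x where "x < length s" "s!x = z" by (auto simp: in_set_conv_nth)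
    then show "z \<in> (!) s ` X" using \<open>z \<in> {1..d}\<close> unfolding X_def by force
  qed (use perm nth_mem in \<open>fastforce simp: X_def\<close>)
  have "card X = d"
    using card_image[of "(!) s" X] img distinct by (simp add: inj_on_nth X_def)
  have "finite X" by (simp add: X_def)
  then have "X \<noteq> {}" using \<open>card X = d\<close> d by auto
  define a b where "a = Min X" and "b = Max X"
  have "a \<in> X" "b \<in> X" using \<open>X \<noteq> {}\<close> \<open>finite X\<close> by (simp_all add: a_def b_def)
  have "X = {a..b}"
  proof (intro equalityI subsetI)
    fix y assume "y \<in> {a..b}"
    then consider "y = a" | "y = b" | "a < y" "y < b" by force
    then show "y \<in> X" using \<open>a \<in> X\<close> \<open>b \<in> X\<close> convex[of a y b] by cases (auto simp: X_def)
  qed (simp add: \<open>finite X\<close> a_def b_def)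
  then have "b - a + 1 = d" using \<open>card X = d\<close> \<open>a \<in> X\<close> by auto
  then have "proper_interval s a b"
    unfolding proper_interval_def using img \<open>X = {a..b}\<close> \<open>b \<in> X\<close> d
    by (auto simp: X_def intro!: exI[of _ 1])
  moreover have "1 \<in> (!) s ` {a..b}" using img \<open>X = {a..b}\<close> d by auto
  ultimately show ?thesis by blast
qed

(* An ascent inside a proper interval [p..q] with values c..d forces the positions of the values
   at most d to be contiguous, so they form a proper interval around 1 unless d is the largest
   value; then [p..q] is a suffix and the values below c sit in the prefix before p. *)
context
  fixes s :: "nat list" and p q r c d :: nat
  assumes distinct: "distinct s" and perm: "set s = {1..length s}"
    and avoids: "avoids_patterns s"
    and interval: "p < q" "q < length s" "(!) s ` {p..q} = {c..d}"
    and ascent: "p \<le> r" "r < q" "s!r < s!(r+1)"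
begin

private lemma value_in_interval_iff: "x < length s \<Longrightarrow> c \<le> s!x \<and> s!x \<le> d \<longleftrightarrow> p \<le> x \<and> x \<le> q"
proof
  assume x: "x < length s" and "c \<le> s!x \<and> s!x \<le> d"
  then obtain x' where "x' \<in> {p..q}" "s!x' = s!x" using interval by (metis atLeastAtMost_iff imageE)
  then show "p \<le> x \<and> x \<le> q" using x interval distinct by (auto simp: nth_eq_iff_index_eq)
qed (use interval in auto)

private lemma no_ascent_across_interval:
  assumes "i + 1 < length s" "s!i < c" "d < s!(i+1)"
  shows False
proof -
  have r: "c \<le> s!r" "s!(r+1) \<le> d" using value_in_interval_iff ascent interval by auto
  have "\<not> (p \<le> i \<and> i \<le> q)" "\<not> (p \<le> i + 1 \<and> i + 1 \<le> q)"
    using value_in_interval_iff[of i] value_in_interval_iff[of "i + 1"] assms by auto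
  then consider "i + 2 \<le> r" | "r + 2 \<le> i" using ascent by linarith
  then show False
  proof cases
    case 1
    then have "nested_pattern (s!i) (s!(i+1)) (s!r) (s!(r+1))"
      using r assms ascent unfolding nested_pattern_def by linarith
    moreover have "r + 1 < length s" using ascent interval by simp
    ultimately show False using avoids 1 unfolding avoids_patterns_def avoids_quad_def by blast
  next
    case 2
    then have "nested_pattern (s!r) (s!(r+1)) (s!i) (s!(i+1))"
      using r assms ascent unfolding nested_pattern_def by linarith
    then show False using avoids 2 assms(1) unfolding avoids_patterns_def avoids_quad_def by blast
  qed
qed

private lemma last_not_below_interval:
  assumes "q + 1 < length s" "s!(length s - 1) < c"
  shows False
proof -
  have "c \<le> s!r" using value_in_interval_iff ascent interval by auto
  then show False using avoids assms ascent unfolding avoids_patterns_def avoids_231_end_def by force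
qed

private lemma below_interval_outside: "x < length s \<Longrightarrow> s!x \<le> d \<Longrightarrow> x < p \<or> q < x \<Longrightarrow> s!x < c"
  using value_in_interval_iff by force

private lemma sublevel_convex:
  assumes "x < y" "y < z" "z < length s" "s!x \<le> d" "s!z \<le> d"
  shows "s!y \<le> d"
proof (rule ccontr)
  assume "\<not> s!y \<le> d"
  then have "y < p \<or> q < y" using value_in_interval_iff[of y] assms by auto
  then consider "y < p" | "q < y" "s!(length s - 1) \<le> d" | "q < y" "\<not> s!(length s - 1) \<le> d"
    by blast
  then show False
  proof cases
    case 1
    obtain i where "x \<le> i" "i < y" "s!i \<le> d" "\<not> s!(Suc i) \<le> d"
      using nat_crossing[of "\<lambda>j. s!j \<le> d"] assms \<open>\<not> s!y \<le> d\<close> by fastforce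
    then show False using no_ascent_across_interval[of i] below_interval_outside[of i] 1 assms by auto
  next
    case 2
    then have "q + 1 < length s" using assms by simp
    moreover have "s!(length s - 1) < c" by (intro below_interval_outside) (use 2 assms in auto)
    ultimately show False by (rule last_not_below_interval)
  next
    case 3
    obtain i where "z \<le> i" "i < length s - 1" "s!i \<le> d" "\<not> s!(Suc i) \<le> d"
      using nat_crossing[of "\<lambda>j. s!j \<le> d" z "length s - 1"] assms 3 by fastforce
    moreover have "i + 1 < length s" using \<open>i < length s - 1\<close> by simp
    ultimately show False using no_ascent_across_interval[of i] below_interval_outside[of i] 3 assms by auto
  qed
qed

private lemma value_bounds: "x < length s \<Longrightarrow> 1 \<le> s!x \<and> s!x \<le> length s"
  using perm nth_mem by fastforce

private lemma top_interval_is_suffix: "d = length s \<Longrightarrow> q = length s - 1"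
  using last_not_below_interval below_interval_outside[of "length s - 1"] value_bounds[of "length s - 1"]
    interval by fastforce

private lemma below_interval_iff_prefix: "d = length s \<Longrightarrow> x < length s \<Longrightarrow> s!x < c \<longleftrightarrow> x < p"
  using below_interval_outside[of x] value_in_interval_iff[of x] value_bounds[of x] top_interval_is_suffix
  by fastforce

private lemma one_two_prefix:
  assumes "d = length s" "c = 2"
  shows "s!0 = 1" "s!1 = 2"
proof -
  have len: "0 < length s" "1 < length s" using interval by auto
  have small: "s!x = 1 \<longleftrightarrow> x < p" if "x < length s" for x
    using below_interval_iff_prefix[OF assms(1) that] value_bounds[OF that] assms(2) by auto
  have "1 \<in> set s" using perm interval by auto
  then have "p \<noteq> 0" using small by (auto simp: in_set_conv_nth)
  moreover have "\<not> 2 \<le> p"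
  proof
    assume "2 \<le> p"
    then have "s!0 = s!1" using small[of 0] small[of 1] len by auto
    then show False using distinct len nth_eq_iff_index_eq[of s 0 1] by auto
  qed
  ultimately show "s!0 = 1" using small[of 0] len by simp
  have "2 \<in> set s" using perm interval by auto
  then obtain x where x: "x < length s" "s!x = 2" by (auto simp: in_set_conv_nth)
  have "x \<noteq> 0"
  proof
    assume "x = 0"
    then show False using x \<open>s!0 = 1\<close> by simp
  qed
  show "s!1 = 2"
  proof (rule ccontr)
    assume "s!1 \<noteq> 2"
    then have "x \<noteq> 1" using x by auto
    then have "2 \<le> x" using \<open>x \<noteq> 0\<close> by linarith
    have "s!(x-1) \<noteq> s!0" "s!(x-1) \<noteq> s!x"
      using nth_eq_iff_index_eq[OF distinct, of "x-1" 0] nth_eq_iff_index_eq[OF distinct, of "x-1" x]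
        x(1) len \<open>2 \<le> x\<close> by auto
    then have "s!(x-1) \<noteq> 1" "s!(x-1) \<noteq> 2" using x \<open>s!0 = 1\<close> by auto
    then have "s!0 < s!(x-1+1) \<and> s!(x-1+1) < s!(x-1)"
      using x \<open>s!0 = 1\<close> \<open>2 \<le> x\<close> value_bounds[of "x-1"] by (simp add: less_imp_diff_less)
    moreover have "1 \<le> x - 1" "x - 1 + 1 < length s" using \<open>2 \<le> x\<close> x by auto
    ultimately show False
      using avoids unfolding avoids_patterns_def avoids_132_start_def by blast
  qed
qed

lemma proper_interval_around_one_of_ascent:
  assumes "q - p + 1 < length s"
  shows "\<exists>a b. proper_interval s a b \<and> 1 \<in> (!) s ` {a..b}"
proof -
  have "c \<le> s!r" "s!(r+1) \<le> d" using value_in_interval_iff ascent interval by auto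
  then have "c < d" using ascent by linarith
  have "c \<in> (!) s ` {p..q}" "d \<in> (!) s ` {p..q}" using interval \<open>c < d\<close> by auto
  then have "1 \<le> c" "d \<le> length s" using value_bounds interval by fastforce+
  consider "c = 1" | "2 \<le> c" "d < length s" | "3 \<le> c" "d = length s" | "c = 2" "d = length s"
    using \<open>1 \<le> c\<close> \<open>d \<le> length s\<close> by linarith
  then show ?thesis
  proof cases
    case 1
    then show ?thesis
      using proper_intervalI[OF distinct interval(1,2) assms interval(3)] \<open>c \<in> (!) s ` {p..q}\<close> by auto
  next
    case 2
    then show ?thesis
      using proper_interval_of_convex_sublevel[OF distinct perm, of d] sublevel_convex \<open>c < d\<close> by simp
  next
    case 3
    have "s!x \<le> c - 1 \<longleftrightarrow> x < p" if "x < length s" for x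
      using below_interval_iff_prefix[OF 3(2) that] 3 by auto
    then show ?thesis
      using proper_interval_of_convex_sublevel[OF distinct perm, of "c - 1"] 3 \<open>c < d\<close> by auto
  next
    case 4
    have "s!x \<le> 2 \<longleftrightarrow> x \<le> 1" if "x < length s" for x
    proof
      assume "s!x \<le> 2"
      then have "s!x = s!0 \<or> s!x = s!1" using one_two_prefix[OF 4(2,1)] value_bounds[OF that] by auto
      moreover have "0 < length s" "1 < length s" using interval by auto
      ultimately show "x \<le> 1" using distinct that by (auto simp: nth_eq_iff_index_eq)
    qed (use one_two_prefix[OF 4(2,1)] le_Suc_eq in auto)
    moreover have "2 < length s" using 4 \<open>c < d\<close> by simp
    ultimately show ?thesis
      using proper_interval_of_convex_sublevel[OF distinct perm, of 2] by auto
  qed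
qed

end

(* Reversal preserves the patterns and the intervals, so the last pair of the interval may be
   assumed to ascend. *)
lemma proper_interval_around_one:
  fixes s :: "nat list"
  assumes distinct: "distinct s" and perm: "set s = {1..length s}" and avoids: "avoids_patterns s"
    and interval: "proper_interval s p q"
  shows "\<exists>a b. proper_interval s a b \<and> 1 \<in> (!) s ` {a..b}"
proof -
  obtain c where pq: "p < q" "q < length s" "q - p + 1 < length s"
    and "(!) s ` {p..q} = {c..<c + (q - p + 1)}"
    using interval unfolding proper_interval_def by blast
  then have img: "(!) s ` {p..q} = {c..c + (q - p)}" by auto
  have "s!(q-1) \<noteq> s!q" using distinct pq by (simp add: nth_eq_iff_index_eq)
  then consider "s!(q-1) < s!q" | "s!q < s!(q-1)" by linarith
  then show ?thesis
  proof cases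
    case 1
    then show ?thesis
      using proper_interval_around_one_of_ascent[OF distinct perm avoids pq(1,2) img, of "q - 1"] pq by auto
  next
    case 2
    have "(!) (rev s) ` {length s - 1 - q..length s - 1 - p} = {c..c + (q - p)}"
      using image_nth_rev[of p q s] pq img by simp
    moreover have "rev s!(length s - 1 - q) < rev s!(length s - 1 - q + 1)"
      using 2 pq by (simp add: rev_nth Suc_diff_Suc)
    moreover have "length s - 1 - q < length s - 1 - p" "length s - 1 - p < length s"
      "(length s - 1 - p) - (length s - 1 - q) + 1 < length s" using pq by auto
    ultimately obtain a b where ab: "proper_interval (rev s) a b" "1 \<in> (!) (rev s) ` {a..b}"
      using proper_interval_around_one_of_ascent[where s = "rev s" and p = "length s - 1 - q"
          and q = "length s - 1 - p" and r = "length s - 1 - q" and c = c and d = "c + (q - p)"]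
        distinct perm avoids avoids_patterns_rev by auto
    then have "proper_interval s (length s - 1 - b) (length s - 1 - a)"
      using proper_interval_rev[of "rev s" a b] by simp
    moreover have "(!) s ` {length s - 1 - b..length s - 1 - a} = (!) (rev s) ` {a..b}"
      using image_nth_rev[of a b "rev s"] ab unfolding proper_interval_def by simp
    ultimately show ?thesis using ab by metis
  qed
qed

lemma simple_if_no_interval_around_one:
  fixes s :: "nat list"
  assumes "distinct s" "set s = {1..length s}" "avoids_patterns s"
    and "\<nexists>a b. proper_interval s a b \<and> 1 \<in> (!) s ` {a..b}"
  shows "is_simple s"
  using proper_interval_around_one assms unfolding is_simple_iff by blast

section \<open>Inflating the entry 1\<close>

definition inflate_one :: "nat list \<Rightarrow> nat list \<Rightarrow> nat list" where
  "inflate_one \<sigma> \<tau> = concat (map (\<lambda>x. if x = 1 then \<tau> else [x + length \<tau> - 1]) \<sigma>)"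

(* base is sigma = u @ 1 # v and word is its inflation by the factor t; collapse sends a position of
   word to the corresponding position of base, the whole factor going to p, and expand x is the
   first position that collapse sends to x. *)
locale inflation =
  fixes u v t :: "nat list"
  assumes t_ne: "t \<noteq> []"
    and u_ge: "\<forall>x\<in>set u. 2 \<le> x" and v_ge: "\<forall>x\<in>set v. 2 \<le> x"
    and t_range: "\<forall>x\<in>set t. 1 \<le> x \<and> x \<le> length t"
begin

definition m where "m = length t"
definition p where "p = length u"
definition shift :: "nat \<Rightarrow> nat" where "shift x = x + m - 1"
definition base where "base = u @ 1 # v"
definition word where "word = map shift u @ t @ map shift v"
definition k where "k = length base"
definition n where "n = length word"

abbreviation in_block :: "nat \<Rightarrow> bool" where "in_block y \<equiv> p \<le> y \<and> y < p + m"

definition collapse :: "nat \<Rightarrow> nat" where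
  "collapse y = (if y < p then y else if y < p + m then p else y + 1 - m)"

definition expand :: "nat \<Rightarrow> nat" where
  "expand x = (if x < p then x else x + m - 1)"

lemma word_eq_inflate_one: "word = inflate_one base t"
proof -
  have "concat (map (\<lambda>x. if x = 1 then t else [shift x]) xs) = map shift xs"
    if "\<forall>x\<in>set xs. 2 \<le> x" for xs
    using that by (induction xs) auto
  then show ?thesis using u_ge v_ge unfolding inflate_one_def word_def base_def shift_def m_def by simp
qed

lemma m_pos: "1 \<le> m" using t_ne by (simp add: m_def Suc_le_eq)
lemma k_eq: "k = p + 1 + length v" by (simp add: k_def base_def p_def)
lemma n_eq: "n = p + m + length v" by (simp add: n_def word_def p_def m_def)
lemma n_eq_k_m: "n = k + m - 1" using k_eq n_eq m_pos by simp
lemma length_word: "length word = n" by (simp add: n_def)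
lemma length_base: "length base = k" by (simp add: k_def)
lemma length_t: "length t = m" by (simp add: m_def)

lemma base_at_p: "base!p = 1" by (simp add: base_def p_def)

lemma base_nth: "x < k \<Longrightarrow> base!x = (if x < p then u!x else if x = p then 1 else v!(x-p-1))"
  by (auto simp: base_def p_def k_eq nth_append nth_Cons')

lemma base_ge_2: "x < k \<Longrightarrow> x \<noteq> p \<Longrightarrow> 2 \<le> base!x"
  using u_ge v_ge by (auto simp: base_nth k_eq p_def)

lemma base_pos: "x < k \<Longrightarrow> 1 \<le> base!x"
  using base_ge_2[of x] base_at_p by (cases "x = p") auto

lemma word_nth: "y < n \<Longrightarrow>
    word!y = (if y < p then shift (u!y) else if y < p + m then t!(y-p) else shift (v!(y-p-m)))"
  by (auto simp: word_def p_def m_def n_eq nth_append)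

lemma word_in_block: "in_block y \<Longrightarrow> word!y = t!(y-p) \<and> 1 \<le> word!y \<and> word!y \<le> m"
  using word_nth[of y] n_eq t_range nth_mem[of "y - p" t] by (auto simp: m_def)

lemma collapse_less: "y < n \<Longrightarrow> collapse y < k"
  using m_pos by (auto simp: collapse_def n_eq k_eq)

lemma collapse_eq_p: "collapse y = p \<longleftrightarrow> in_block y"
  using m_pos by (auto simp: collapse_def)

lemma word_outside_block:
  assumes "y < n" "\<not> in_block y"
  shows "word!y = base!(collapse y) + m - 1" "2 \<le> base!(collapse y)"
proof -
  have c: "collapse y < k" "collapse y \<noteq> p" using collapse_less collapse_eq_p assms by auto
  then show "2 \<le> base!(collapse y)" using base_ge_2 by simp
  show "word!y = base!(collapse y) + m - 1"
  proof (cases "y < p")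
    case True
    then show ?thesis using assms c by (simp add: word_nth base_nth shift_def collapse_def)
  next
    case False
    then show ?thesis using assms m_pos c
      by (simp add: word_nth base_nth shift_def collapse_def add.commute)
  qed
qed

lemma word_outside_block_gt_m: "y < n \<Longrightarrow> \<not> in_block y \<Longrightarrow> m < word!y"
  using word_outside_block by fastforce

lemma word_le_m_iff: "y < n \<Longrightarrow> word!y \<le> m \<longleftrightarrow> in_block y"
  using word_outside_block_gt_m[of y] word_in_block[of y] by force

lemma word_less_iff_base_less:
  assumes "y < n" "y' < n" "collapse y \<noteq> collapse y'"
  shows "word!y < word!y' \<longleftrightarrow> base!(collapse y) < base!(collapse y')"
proof -
  have "\<not> (in_block y \<and> in_block y')" using assms(3) collapse_eq_p[of y] collapse_eq_p[of y'] by argo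
  then consider "in_block y" "\<not> in_block y'" | "\<not> in_block y" "in_block y'" | "\<not> in_block y" "\<not> in_block y'"
    by blast
  then show ?thesis
  proof cases
    case 1
    then have "word!y < word!y'" "base!(collapse y) < base!(collapse y')"
      using word_in_block[of y] word_outside_block_gt_m[OF assms(2)] word_outside_block(2)[OF assms(2)]
        collapse_eq_p[of y] base_at_p by auto
    then show ?thesis by blast
  next
    case 2
    then have "\<not> word!y < word!y'" "\<not> base!(collapse y) < base!(collapse y')"
      using word_in_block[of y'] word_outside_block_gt_m[OF assms(1)] word_outside_block(2)[OF assms(1)]
        collapse_eq_p[of y'] base_at_p by auto
    then show ?thesis by blast
  next
    case 3
    then show ?thesis using word_outside_block[OF assms(1)] word_outside_block[OF assms(2)] by auto
  qed
qed

lemma nested_pattern_cong: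
  assumes "d < b \<longleftrightarrow> d' < b'" "b < a \<longleftrightarrow> b' < a'" "a < c \<longleftrightarrow> a' < c'" "c < d \<longleftrightarrow> c' < d'"
    "b < d \<longleftrightarrow> b' < d'" "d < c \<longleftrightarrow> d' < c'" "c < a \<longleftrightarrow> c' < a'" "a < b \<longleftrightarrow> a' < b'"
  shows "nested_pattern a b c d \<longleftrightarrow> nested_pattern a' b' c' d'"
  using assms unfolding nested_pattern_def by blast

lemma nested_pattern_word_iff_base:
  assumes "y1 < n" "y2 < n" "y3 < n" "y4 < n"
    "distinct [collapse y1, collapse y2, collapse y3, collapse y4]"
  shows "nested_pattern (word!y1) (word!y2) (word!y3) (word!y4) \<longleftrightarrow>
    nested_pattern (base!collapse y1) (base!collapse y2) (base!collapse y3) (base!collapse y4)"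
  using assms by (intro nested_pattern_cong word_less_iff_base_less) auto

lemma collapse_mono: "y \<le> y' \<Longrightarrow> collapse y \<le> collapse y'"
  by (auto simp: collapse_def)

lemma collapse_strict_mono: "y < y' \<Longrightarrow> \<not> (in_block y \<and> in_block y') \<Longrightarrow> collapse y < collapse y'"
  by (auto simp: collapse_def)

lemma collapse_Suc: "\<not> (in_block y \<and> in_block (y + 1)) \<Longrightarrow> collapse (y + 1) = collapse y + 1"
  using m_pos by (auto simp: collapse_def)

lemma collapse_0: "collapse 0 = 0"
  using m_pos by (auto simp: collapse_def)

lemma collapse_last: "collapse (n - 1) = k - 1"
  unfolding collapse_def n_eq k_eq using m_pos by (cases "length v") auto

lemma collapse_expand: "x < k \<Longrightarrow> collapse (expand x) = x \<and> expand x < n"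
  using m_pos by (auto simp: collapse_def expand_def n_eq k_eq)

lemma collapse_expand_Suc: "x + 1 < k \<Longrightarrow> collapse (expand x + 1) = x + 1 \<and> expand x + 1 < n"
  using m_pos by (auto simp: collapse_def expand_def n_eq k_eq)

lemma expand_gap: "x + 2 \<le> x' \<Longrightarrow> expand x + 2 \<le> expand x'"
  using m_pos by (auto simp: expand_def)

lemma base_avoids_quad:
  assumes "avoids_quad word" shows "avoids_quad base"
  unfolding avoids_quad_def length_base
proof (intro allI impI notI)
  fix i j assume ij: "i + 2 \<le> j" "j + 1 < k"
    and pat: "nested_pattern (base!i) (base!(i+1)) (base!j) (base!(j+1))"
  have e: "collapse (expand i) = i" "expand i < n" "collapse (expand i + 1) = i + 1" "expand i + 1 < n"
    "collapse (expand j) = j" "expand j < n" "collapse (expand j + 1) = j + 1" "expand j + 1 < n"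
    using collapse_expand[of i] collapse_expand_Suc[of i] collapse_expand[of j] collapse_expand_Suc[of j] ij
    by auto
  then have "nested_pattern (word!expand i) (word!(expand i + 1)) (word!expand j) (word!(expand j + 1))"
    using nested_pattern_word_iff_base[of "expand i" "expand i + 1" "expand j" "expand j + 1"] ij pat by auto
  then show False
    using assms expand_gap[OF ij(1)] e unfolding avoids_quad_def length_word by blast
qed

lemma base_avoids_231_end:
  assumes "avoids_231_end word" shows "avoids_231_end base"
  unfolding avoids_231_end_def length_base
proof (intro allI impI notI)
  fix i assume i: "i + 2 < k" and pat: "base!(k - 1) < base!i \<and> base!i < base!(i+1)"
  have e: "collapse (expand i) = i" "expand i < n" "collapse (expand i + 1) = i + 1" "expand i + 1 < n"
    using collapse_expand[of i] collapse_expand_Suc[of i] i by auto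
  have "collapse (n - 1) = k - 1" "n - 1 < n" using collapse_last e by auto
  moreover have "expand i + 2 < n"
  proof (rule ccontr)
    assume "\<not> expand i + 2 < n"
    then have "collapse (n - 1) \<le> collapse (expand i + 1)" by (intro collapse_mono) simp
    then show False using collapse_last e i by simp
  qed
  moreover have "word!(n - 1) < word!(expand i) \<longleftrightarrow> base!(k - 1) < base!i"
    "word!(expand i) < word!(expand i + 1) \<longleftrightarrow> base!i < base!(i+1)"
    using word_less_iff_base_less e calculation i by auto
  ultimately show False using assms pat unfolding avoids_231_end_def length_word by auto
qed

lemma base_avoids_132_start:
  assumes "avoids_132_start word" shows "avoids_132_start base"
  unfolding avoids_132_start_def length_base
proof (intro allI impI notI)
  fix j assume j: "1 \<le> j" "j + 1 < k" and pat: "base!0 < base!(j+1) \<and> base!(j+1) < base!j"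
  have e: "collapse (expand j) = j" "expand j < n" "collapse (expand j + 1) = j + 1" "expand j + 1 < n"
    using collapse_expand[of j] collapse_expand_Suc[of j] j by auto
  have "expand j \<noteq> 0"
  proof
    assume "expand j = 0"
    then show False using collapse_0 e(1) j by simp
  qed
  moreover have "word!0 < word!(expand j + 1) \<longleftrightarrow> base!0 < base!(j+1)"
    "word!(expand j + 1) < word!(expand j) \<longleftrightarrow> base!(j+1) < base!j"
    using word_less_iff_base_less collapse_0 e j by auto
  ultimately show False using assms pat e unfolding avoids_132_start_def length_word by auto
qed

lemma t_avoids_quad:
  assumes "avoids_quad word" shows "avoids_quad t"
  unfolding avoids_quad_def length_t
proof (intro allI impI notI)
  fix i j assume ij: "i + 2 \<le> j" "j + 1 < m"
    and "nested_pattern (t!i) (t!(i+1)) (t!j) (t!(j+1))"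
  then have "nested_pattern (word!(p+i)) (word!(p+i+1)) (word!(p+j)) (word!(p+j+1))"
    using word_in_block[of "p+i"] word_in_block[of "p+i+1"] word_in_block[of "p+j"] word_in_block[of "p+j+1"]
    by simp
  then show False using assms ij n_eq unfolding avoids_quad_def length_word by auto
qed

lemma t_avoids_231_end:
  assumes "avoids_quad word" "avoids_231_end word" shows "avoids_231_end t"
  unfolding avoids_231_end_def length_t
proof (intro allI impI notI)
  fix i assume i: "i + 2 < m" and pat: "t!(m - 1) < t!i \<and> t!i < t!(i+1)"
  have "in_block (p + (m-1))" using m_pos by simp
  then have t: "word!(p+i) = t!i" "word!(p+i+1) = t!(i+1)" "word!(p+(m-1)) = t!(m-1)" "t!(i+1) \<le> m"
    "t!(m-1) \<le> m"
    using word_in_block[of "p+i"] word_in_block[of "p+i+1"] word_in_block[of "p+(m-1)"] i by auto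
  show False
  proof (cases "length v = 0")
    case True
    then have "n - 1 = p + (m-1)" using n_eq m_pos by simp
    moreover have "p + i + 2 < n" using i True n_eq by simp
    then have "\<not> (word!(n-1) < word!(p+i) \<and> word!(p+i) < word!(p+i+1))"
      using assms(2) unfolding avoids_231_end_def length_word by blast
    ultimately show False using t pat by simp
  next
    case False
    then have "p + m < n" using n_eq by simp
    then have "m < word!(p+m)" using word_outside_block_gt_m by simp
    then have "nested_pattern (word!(p+i)) (word!(p+i+1)) (word!(p+(m-1))) (word!(p+(m-1)+1))"
      using t pat m_pos unfolding nested_pattern_def by (simp add: add.assoc)
    moreover have "p + i + 2 \<le> p + (m-1)" "p + (m-1) + 1 < n" using i \<open>p + m < n\<close> m_pos by auto
    ultimately show False using assms(1) unfolding avoids_quad_def length_word by blast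
  qed
qed

lemma t_avoids_132_start:
  assumes "avoids_quad word" "avoids_132_start word" shows "avoids_132_start t"
  unfolding avoids_132_start_def length_t
proof (intro allI impI notI)
  fix j assume j: "1 \<le> j" "j + 1 < m" and pat: "t!0 < t!(j+1) \<and> t!(j+1) < t!j"
  have t: "word!p = t!0" "word!(p+j+1) = t!(j+1)" "word!(p+j) = t!j" "t!j \<le> m"
    using word_in_block[of p] word_in_block[of "p+j+1"] word_in_block[of "p+j"] j by auto
  show False
  proof (cases "p = 0")
    case True
    then show False using assms(2) t pat j n_eq unfolding avoids_132_start_def length_word by auto
  next
    case False
    then have "m < word!(p-1)" using word_outside_block_gt_m[of "p-1"] n_eq by auto
    then have "nested_pattern (word!(p-1)) (word!(p-1+1)) (word!(p+j)) (word!(p+j+1))"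
      using t pat False unfolding nested_pattern_def by simp
    moreover have "p - 1 + 2 \<le> p + j" "p + j + 1 < n" using j False n_eq by auto
    ultimately show False using assms(1) unfolding avoids_quad_def length_word by blast
  qed
qed

lemma word_no_pattern_within_block:
  assumes "avoids_quad t" "i + 2 \<le> j" "in_block i" "in_block (j + 1)"
  shows "\<not> nested_pattern (word!i) (word!(i+1)) (word!j) (word!(j+1))"
proof -
  have "word!i = t!(i-p)" "word!(i+1) = t!(i-p+1)" "word!j = t!(j-p)" "word!(j+1) = t!(j-p+1)"
    using word_in_block[of i] word_in_block[of "i+1"] word_in_block[of j] word_in_block[of "j+1"] assms
    by (auto simp: Suc_diff_le)
  moreover have "i - p + 2 \<le> j - p" "j - p + 1 < m" using assms by auto
  ultimately show ?thesis using assms(1) unfolding avoids_quad_def length_t by auto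
qed

lemma word_no_pattern_left_in_block:
  assumes "avoids_231_end t" "i + 2 \<le> j" "j + 1 < n" "in_block i" "in_block (i + 1)" "\<not> in_block (j + 1)"
  shows "\<not> nested_pattern (word!i) (word!(i+1)) (word!j) (word!(j+1))"
proof
  assume pat: "nested_pattern (word!i) (word!(i+1)) (word!j) (word!(j+1))"
  have small: "word!i = t!(i-p)" "word!(i+1) = t!(i-p+1)" "word!i \<le> m" "word!(i+1) \<le> m"
    using word_in_block[of i] word_in_block[of "i+1"] assms by (auto simp: Suc_diff_le)
  have big: "m < word!(j+1)" using word_outside_block_gt_m assms by simp
  show False
  proof (cases "in_block j")
    case True
    then have "j - p = m - 1" using assms(6) by auto
    then have "word!j = t!(m-1)" "word!j \<le> m" using True word_in_block[of j] by auto
    moreover have "word!j < word!i \<and> word!i < word!(i+1)"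
      using pat small big \<open>word!j \<le> m\<close> unfolding nested_pattern_def by auto
    moreover have "i - p + 2 < m" using assms True by auto
    ultimately show False using small assms(1) unfolding avoids_231_end_def length_t by auto
  next
    case False
    then have "m < word!j" using word_outside_block_gt_m assms by simp
    then show False using pat small big unfolding nested_pattern_def by auto
  qed
qed

lemma word_no_pattern_right_in_block:
  assumes "avoids_132_start t" "i + 2 \<le> j" "j + 1 < n" "\<not> in_block i" "in_block j" "in_block (j + 1)"
  shows "\<not> nested_pattern (word!i) (word!(i+1)) (word!j) (word!(j+1))"
proof
  assume pat: "nested_pattern (word!i) (word!(i+1)) (word!j) (word!(j+1))"
  have small: "word!j = t!(j-p)" "word!(j+1) = t!(j-p+1)" "word!j \<le> m" "word!(j+1) \<le> m"
    using word_in_block[of j] word_in_block[of "j+1"] assms by (auto simp: Suc_diff_le)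
  have big: "m < word!i" using word_outside_block_gt_m assms by simp
  show False
  proof (cases "in_block (i + 1)")
    case True
    then have "i + 1 = p" "word!(i+1) = t!0" "word!(i+1) \<le> m"
      using assms(4) word_in_block[of "i+1"] by auto
    moreover have "word!(i+1) < word!(j+1) \<and> word!(j+1) < word!j"
      using pat small big \<open>word!(i+1) \<le> m\<close> unfolding nested_pattern_def by auto
    moreover have "1 \<le> j - p" "j - p + 1 < m" using assms True by auto
    ultimately show False using small assms(1) unfolding avoids_132_start_def length_t by auto
  next
    case False
    then have "m < word!(i+1)" using word_outside_block_gt_m assms by simp
    then show False using pat small big unfolding nested_pattern_def by auto
  qed
qed

lemma word_no_pattern_outside_block:
  assumes "avoids_quad base" "i + 2 \<le> j" "j + 1 < n"
    "\<not> (in_block i \<and> in_block (i + 1))" "\<not> (in_block j \<and> in_block (j + 1))"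
  shows "\<not> nested_pattern (word!i) (word!(i+1)) (word!j) (word!(j+1))"
proof (cases "in_block (i + 1) \<and> in_block j")
  case True
  then have "i = p - 1" "j = p + m - 1" "1 \<le> p" using assms by auto
  then have "m < word!i" "m < word!(j+1)" "word!(i+1) \<le> m" "word!j \<le> m"
    using word_outside_block_gt_m[of i] word_outside_block_gt_m[of "j+1"] word_in_block[of "i+1"]
      word_in_block[of j] True assms by auto
  then show ?thesis unfolding nested_pattern_def by auto
next
  case False
  have c: "collapse (i+1) = collapse i + 1" "collapse (j+1) = collapse j + 1" "collapse (i+1) < collapse j"
    using collapse_Suc collapse_strict_mono[of "i+1" j] False assms by auto
  have "collapse (j+1) < k" using collapse_less assms by simp
  moreover have "nested_pattern (word!i) (word!(i+1)) (word!j) (word!(j+1)) \<longleftrightarrow>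
      nested_pattern (base!collapse i) (base!collapse (i+1)) (base!collapse j) (base!collapse (j+1))"
    using c assms by (intro nested_pattern_word_iff_base) auto
  ultimately show ?thesis using assms(1) c unfolding avoids_quad_def length_base by auto
qed

lemma word_avoids_quad:
  assumes "avoids_quad base" "avoids_patterns t" shows "avoids_quad word"
  unfolding avoids_quad_def length_word
proof (intro allI impI)
  fix i j assume ij: "i + 2 \<le> j" "j + 1 < n"
  consider "in_block i \<and> in_block (i + 1)" "in_block j \<and> in_block (j + 1)"
    | "in_block i \<and> in_block (i + 1)" "\<not> in_block (j + 1)"
    | "\<not> in_block i" "in_block j \<and> in_block (j + 1)"
    | "\<not> (in_block i \<and> in_block (i + 1))" "\<not> (in_block j \<and> in_block (j + 1))"
    using ij by linarith
  then show "\<not> nested_pattern (word!i) (word!(i+1)) (word!j) (word!(j+1))"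
    using word_no_pattern_within_block word_no_pattern_left_in_block word_no_pattern_right_in_block
      word_no_pattern_outside_block assms ij unfolding avoids_patterns_def by cases blast+
qed

lemma word_avoids_231_end:
  assumes "avoids_231_end base" "avoids_231_end t" shows "avoids_231_end word"
  unfolding avoids_231_end_def length_word
proof (intro allI impI notI)
  fix i assume i: "i + 2 < n" and pat: "word!(n-1) < word!i \<and> word!i < word!(i+1)"
  consider "in_block i \<and> in_block (i + 1)" "in_block (n - 1)"
    | "in_block i" "\<not> in_block (n - 1)"
    | "\<not> in_block i" "in_block (i + 1)"
    | "\<not> (in_block i \<and> in_block (i + 1))" "\<not> (in_block (i + 1) \<and> in_block (n - 1))"
    using i by linarith
  then show False
  proof cases
    case 1
    then have "n - 1 - p = m - 1" "i - p + 2 < m" using i n_eq by auto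
    then have "t!(m-1) < t!(i-p) \<and> t!(i-p) < t!(i-p+1)"
      using pat 1 word_in_block[of "n-1"] word_in_block[of i] word_in_block[of "i+1"] by (simp add: Suc_diff_le)
    then show False using assms(2) \<open>i - p + 2 < m\<close> unfolding avoids_231_end_def length_t by blast
  next
    case 2
    then show False using pat word_outside_block_gt_m[of "n-1"] word_in_block[of i] i by auto
  next
    case 3
    then show False using pat word_outside_block_gt_m[of i] word_in_block[of "i+1"] i by auto
  next
    case 4
    have c: "collapse (i+1) = collapse i + 1" "collapse (i+1) < collapse (n-1)"
      using collapse_Suc collapse_strict_mono[of "i+1" "n-1"] 4 i by auto
    have "base!(k-1) < base!(collapse i) \<and> base!(collapse i) < base!(collapse i + 1)"
      using pat word_less_iff_base_less[of "n-1" i] word_less_iff_base_less[of i "i+1"] collapse_last c i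
      by auto
    moreover have "collapse i + 2 < k" using c collapse_last by linarith
    ultimately show False using assms(1) unfolding avoids_231_end_def length_base by blast
  qed
qed

lemma word_avoids_132_start:
  assumes "avoids_132_start base" "avoids_132_start t" shows "avoids_132_start word"
  unfolding avoids_132_start_def length_word
proof (intro allI impI notI)
  fix j assume j: "1 \<le> j" "j + 1 < n" and pat: "word!0 < word!(j+1) \<and> word!(j+1) < word!j"
  consider "in_block j \<and> in_block (j + 1)" "in_block 0"
    | "in_block (j + 1)" "\<not> in_block 0"
    | "\<not> in_block (j + 1)" "in_block j"
    | "\<not> (in_block j \<and> in_block (j + 1))" "\<not> (in_block 0 \<and> in_block j)"
    using j by linarith
  then show False
  proof cases
    case 1
    then have "t!0 < t!(j+1) \<and> t!(j+1) < t!j"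
      using pat word_in_block[of 0] word_in_block[of j] word_in_block[of "j+1"] by simp
    then show False using assms(2) 1 j unfolding avoids_132_start_def length_t by auto
  next
    case 2
    then show False using pat word_outside_block_gt_m[of 0] word_in_block[of "j+1"] j by auto
  next
    case 3
    then show False using pat word_outside_block_gt_m[of "j+1"] word_in_block[of j] j by auto
  next
    case 4
    have c: "collapse (j+1) = collapse j + 1" "0 < collapse j"
      using collapse_Suc[of j] collapse_strict_mono[of 0 j] collapse_0 4 j by auto
    moreover have "collapse (j+1) < k" using collapse_less j by simp
    ultimately have c: "collapse (j+1) = collapse j + 1" "0 < collapse j" "collapse j + 1 < k" by auto
    then have "base!0 < base!(collapse j + 1) \<and> base!(collapse j + 1) < base!(collapse j)"
      using pat word_less_iff_base_less[of 0 "j+1"] word_less_iff_base_less[of "j+1" j] collapse_0 j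
      by auto
    then show False using assms(1) c unfolding avoids_132_start_def length_base by auto
  qed
qed

lemma word_avoids_patterns_iff: "avoids_patterns word \<longleftrightarrow> avoids_patterns base \<and> avoids_patterns t"
  using base_avoids_quad base_avoids_231_end base_avoids_132_start
    t_avoids_quad t_avoids_231_end t_avoids_132_start
    word_avoids_quad word_avoids_231_end word_avoids_132_start
  unfolding avoids_patterns_def by blast

end

section \<open>Bottom blocks and the decomposition of avoiders\<close>

definition bottom_block :: "nat list \<Rightarrow> nat \<Rightarrow> bool" where
  "bottom_block w j \<longleftrightarrow> (\<exists>q. q + j \<le> length w \<and> (\<forall>y < length w. w!y \<le> j \<longleftrightarrow> q \<le> y \<and> y < q + j))"

context inflation
begin

lemma bottom_block_m: "bottom_block word m"
  unfolding bottom_block_def length_word using word_le_m_iff n_eq by (intro exI[of _ p]) auto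

lemma bottom_block_covers_block:
  assumes "\<And>y. y < n \<Longrightarrow> word!y \<le> j \<longleftrightarrow> q \<le> y \<and> y < q + j" "m \<le> j"
  shows "q \<le> p" "p + m \<le> q + j"
proof -
  have "in_block p" "in_block (p + m - 1)" using m_pos by auto
  then have "word!p \<le> j" "word!(p + m - 1) \<le> j" using word_in_block assms(2) by fastforce+
  moreover have "p < n" "p + m - 1 < n" using n_eq m_pos by auto
  ultimately show "q \<le> p" "p + m \<le> q + j" using assms(1)[of p] assms(1)[of "p + m - 1"] m_pos by auto
qed

lemma proper_interval_of_bottom_block:
  assumes perm: "distinct base" "set base = {1..k}"
    and block: "bottom_block word j" and j: "m < j" "j < n"
  shows "\<exists>a b. proper_interval base a b"
proof -
  obtain q where q: "q + j \<le> n" "\<And>y. y < n \<Longrightarrow> word!y \<le> j \<longleftrightarrow> q \<le> y \<and> y < q + j"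
    using block unfolding bottom_block_def length_word by blast
  have "q \<le> p" "p + m \<le> q + j" using bottom_block_covers_block[OF q(2)] j by auto
  define a b where "a = q" and "b = q + j - m"
  have b: "b < k" using q(1) n_eq_k_m m_pos j unfolding b_def by auto
  have small_iff: "base!x \<le> j - m + 1 \<longleftrightarrow> a \<le> x \<and> x \<le> b" if x: "x < k" for x
  proof (cases "x = p")
    case True
    then show ?thesis using base_at_p \<open>q \<le> p\<close> \<open>p + m \<le> q + j\<close> unfolding a_def b_def by auto
  next
    case False
    have y: "collapse (expand x) = x" "expand x < n" "\<not> in_block (expand x)"
      using collapse_expand[OF x] collapse_eq_p[of "expand x"] False by auto
    then have "word!(expand x) = base!x + m - 1" using word_outside_block by auto
    then have "base!x \<le> j - m + 1 \<longleftrightarrow> word!(expand x) \<le> j"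
      using base_ge_2[OF x False] j m_pos by linarith
    also have "\<dots> \<longleftrightarrow> q \<le> expand x \<and> expand x < q + j" using q(2)[OF y(2)] .
    also have "\<dots> \<longleftrightarrow> a \<le> x \<and> x \<le> b"
      using False \<open>q \<le> p\<close> \<open>p + m \<le> q + j\<close> j m_pos
      by (cases "x < p") (auto simp: a_def b_def expand_def)
    finally show ?thesis .
  qed
  have "(!) base ` {a..b} = {1..j - m + 1}"
  proof (intro equalityI subsetI)
    fix z assume "z \<in> {1..j - m + 1}"
    then have "z \<in> set base" using perm b \<open>q \<le> p\<close> \<open>p + m \<le> q + j\<close> unfolding a_def b_def by auto
    then obtain x where "x < k" "base!x = z" by (auto simp: in_set_conv_nth length_base)
    then show "z \<in> (!) base ` {a..b}" using small_iff[of x] \<open>z \<in> {1..j - m + 1}\<close> by auto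
  qed (use small_iff base_pos b in auto)
  moreover have "a < b" "b - a + 1 < k" using j n_eq_k_m unfolding a_def b_def by auto
  ultimately have "proper_interval base a b"
    using proper_intervalI[OF perm(1), of a b 1 "j - m + 1"] b by (simp add: length_base)
  then show ?thesis by blast
qed

lemma bottom_block_of_proper_interval:
  assumes distinct: "distinct base"
    and interval: "proper_interval base a b" and around_p: "a \<le> p" "p \<le> b"
  shows "bottom_block word (m + (b - a)) \<and> m < m + (b - a) \<and> m + (b - a) < n"
proof -
  have ab: "a < b" "b < k" "b - a + 1 < k" using interval unfolding proper_interval_def length_base by auto
  have "\<forall>y\<in>set base. 1 \<le> y" using base_pos by (auto simp: in_set_conv_nth length_base)
  moreover have "1 \<in> (!) base ` {a..b}" using around_p base_at_p by force
  ultimately have small_iff: "base!x \<le> b - a + 1 \<longleftrightarrow> a \<le> x \<and> x \<le> b" if "x < k" for x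
    using proper_interval_around_one_values[OF distinct _ interval] that by (simp add: length_base)
  have "bottom_block word (m + (b - a))"
    unfolding bottom_block_def length_word
  proof (intro exI[of _ a] conjI allI impI)
    show "a + (m + (b - a)) \<le> n" using ab n_eq_k_m m_pos by auto
  next
    fix y assume y: "y < n"
    show "word!y \<le> m + (b - a) \<longleftrightarrow> a \<le> y \<and> y < a + (m + (b - a))"
    proof (cases "in_block y")
      case True
      then show ?thesis using word_in_block[of y] around_p ab by auto
    next
      case False
      have w: "word!y = base!(collapse y) + m - 1" "2 \<le> base!(collapse y)" "collapse y < k"
        using word_outside_block[OF y False] collapse_less[OF y] by auto
      then have "word!y \<le> m + (b - a) \<longleftrightarrow> a \<le> collapse y \<and> collapse y \<le> b"
        using small_iff[of "collapse y"] m_pos by auto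
      also have "\<dots> \<longleftrightarrow> a \<le> y \<and> y < a + (m + (b - a))"
        using False around_p ab m_pos unfolding collapse_def by auto
      finally show ?thesis .
    qed
  qed
  then show ?thesis using ab n_eq_k_m m_pos by auto
qed

lemma inj_shift: "inj shift"
  unfolding shift_def inj_def using m_pos by auto

lemma shift_gt_m: "x \<in> set u \<union> set v \<Longrightarrow> m < shift x"
  using u_ge v_ge m_pos unfolding shift_def by fastforce

lemma set_t_subset: "set t \<subseteq> {1..m}"
  using t_range by (auto simp: m_def)

lemma distinct_word_iff: "distinct word \<longleftrightarrow> distinct t \<and> distinct (u @ v)"
proof -
  have "set t \<inter> shift ` (set u \<union> set v) = {}" using set_t_subset shift_gt_m by fastforce
  then have "distinct word \<longleftrightarrow> distinct t \<and> distinct (map shift (u @ v))"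
    unfolding word_def by auto
  also have "\<dots> \<longleftrightarrow> distinct t \<and> distinct (u @ v)"
    using inj_on_subset[OF inj_shift] by (simp only: distinct_map) blast
  finally show ?thesis .
qed

lemma set_word_eq_iff: "set word = {1..n} \<longleftrightarrow> set t = {1..m} \<and> set u \<union> set v = {2..k}"
proof -
  define X where "X = set u \<union> set v"
  have "shift ` {2..k} = {m+1..n}"
  proof (intro equalityI subsetI)
    fix z assume "z \<in> {m+1..n}"
    then have "z = shift (z + 1 - m)" "z + 1 - m \<in> {2..k}" using m_pos n_eq_k_m unfolding shift_def by auto
    then show "z \<in> shift ` {2..k}" by blast
  qed (use m_pos n_eq_k_m in \<open>auto simp: shift_def\<close>)
  then have "shift ` X = {m+1..n} \<longleftrightarrow> X = {2..k}" using inj_image_eq_iff[OF inj_shift] by metis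
  moreover have "set word = {1..n} \<longleftrightarrow> set t = {1..m} \<and> shift ` X = {m+1..n}"
  proof -
    have word: "set word = set t \<union> shift ` X" unfolding word_def X_def by auto
    have "shift ` X \<subseteq> {m+1..}" using shift_gt_m unfolding X_def by (auto simp: Suc_le_eq)
    then have split: "set t = set word \<inter> {1..m}" "shift ` X = set word \<inter> {m+1..}"
      using word set_t_subset by auto
    have "m \<le> n" using n_eq by simp
    show ?thesis
    proof
      assume "set word = {1..n}"
      then show "set t = {1..m} \<and> shift ` X = {m+1..n}" using split \<open>m \<le> n\<close> by auto
    next
      assume "set t = {1..m} \<and> shift ` X = {m+1..n}"
      then show "set word = {1..n}" using word \<open>m \<le> n\<close> by auto
    qed
  qed
  ultimately show ?thesis unfolding X_def by blast
qed

lemma set_base_eq_iff: "set base = {1..k} \<longleftrightarrow> set u \<union> set v = {2..k}"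
proof -
  have "set base = insert 1 (set u \<union> set v)" "set u \<union> set v = set base - {1}"
    using u_ge v_ge unfolding base_def by auto
  moreover have "{1..k} - {1} = {2..k}" "insert 1 {2..k} = {1..k}" using k_eq by auto
  ultimately show ?thesis by metis
qed

lemma word_perm_iff:
  "distinct word \<and> set word = {1..n} \<longleftrightarrow>
    (distinct base \<and> set base = {1..k}) \<and> (distinct t \<and> set t = {1..m})"
proof -
  have "distinct base \<longleftrightarrow> distinct (u @ v)" using u_ge v_ge unfolding base_def by auto
  then show ?thesis using distinct_word_iff set_word_eq_iff set_base_eq_iff by blast
qed

end

definition deflate :: "nat list \<Rightarrow> nat \<Rightarrow> nat \<Rightarrow> nat list \<times> nat list" where
  "deflate w q j =
     (map (\<lambda>x. x - (j - 1)) (take q w) @ 1 # map (\<lambda>x. x - (j - 1)) (drop (q + j) w), take j (drop q w))"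

lemma (in inflation) deflate_word: "deflate word p m = (base, t)"
proof -
  have "map (\<lambda>x. x - (m - 1)) (map shift xs) = xs" for xs
    using m_pos by (induction xs) (auto simp: shift_def)
  then show ?thesis unfolding deflate_def word_def base_def by (simp add: p_def m_def)
qed

lemma inflation_of_bottom_block:
  assumes perm: "distinct w" "set w = {1..length w}"
    and block: "bottom_block w j" and j: "1 \<le> j" "j < length w"
  shows "\<exists>u v t. inflation u v t \<and> inflation.word u v t = w \<and> length t = j"
proof -
  obtain q where q: "q + j \<le> length w" "\<And>y. y < length w \<Longrightarrow> w!y \<le> j \<longleftrightarrow> q \<le> y \<and> y < q + j"
    using block unfolding bottom_block_def by blast
  define t u v where "t = take j (drop q w)"
    and "u = map (\<lambda>x. x - (j - 1)) (take q w)" and "v = map (\<lambda>x. x - (j - 1)) (drop (q + j) w)"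
  have outer: "\<forall>x \<in> set (take q w) \<union> set (drop (q + j) w). j < x"
    using q by (auto simp: in_set_conv_nth not_le[symmetric])
  have "length t = j" using q(1) unfolding t_def by simp
  have "\<forall>x\<in>set t. 1 \<le> x \<and> x \<le> length t"
  proof
    fix x assume "x \<in> set t"
    then obtain y where "y < j" "x = w!(q + y)" using q(1) unfolding t_def by (auto simp: in_set_conv_nth)
    then show "1 \<le> x \<and> x \<le> length t"
      using q(1) q(2)[of "q + y"] perm nth_mem[of "q + y" w] \<open>length t = j\<close> by force
  qed
  moreover have "2 \<le> x - (j - 1)" if "x \<in> set (take q w) \<union> set (drop (q + j) w)" for x
  proof -
    have "j < x" using outer that by blast
    then show ?thesis using j by linarith
  qed
  then have "\<forall>x\<in>set u. 2 \<le> x" "\<forall>x\<in>set v. 2 \<le> x" unfolding u_def v_def by auto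
  ultimately interpret inflation u v t using \<open>length t = j\<close> j by unfold_locales auto
  have "map shift (map (\<lambda>x. x - (j - 1)) xs) = xs" if "\<forall>x\<in>set xs. j < x" for xs
    using that j(1) by (induction xs) (auto simp: shift_def m_def \<open>length t = j\<close>)
  then have "map shift u = take q w" "map shift v = drop (q + j) w"
    using outer unfolding u_def v_def by auto
  then have "word = take q w @ t @ drop (q + j) w" unfolding word_def by simp
  also have "\<dots> = w" unfolding t_def by (metis add.commute append_take_drop_id drop_drop)
  finally have "word = w" .
  then show ?thesis using \<open>length t = j\<close> inflation_axioms by blast
qed

lemma mem_A_set_iff: "w \<in> A_set n \<longleftrightarrow> distinct w \<and> set w = {1..n} \<and> avoids_patterns w"
  unfolding A_set_def permutations_of_set_def avoids_all_iff_avoids_patterns by auto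

lemma length_of_perm: "distinct w \<Longrightarrow> set w = {1..n} \<Longrightarrow> length w = n"
  using distinct_card[of w] by simp

lemma bottom_block_1:
  assumes "distinct w" "set w = {1..length w}" "1 \<le> length w"
  shows "bottom_block w 1"
proof -
  obtain q where q: "q < length w" "w!q = 1"
    using assms by (metis atLeastAtMost_iff in_set_conv_nth order_refl)
  have "w!y \<le> 1 \<longleftrightarrow> y = q" if "y < length w" for y
    using that q assms nth_mem[OF that] nth_eq_iff_index_eq[OF assms(1) that q(1)] by fastforce
  then show ?thesis unfolding bottom_block_def using q by (intro exI[of _ q]) auto
qed

lemma inflation_of_perms:
  assumes "distinct \<sigma>" "set \<sigma> = {1..k}" "1 \<le> k" "set \<tau> = {1..j}" "1 \<le> j" "length \<tau> = j"
  obtains u v where "\<sigma> = u @ 1 # v" "inflation u v \<tau>"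
proof -
  obtain u v where uv: "\<sigma> = u @ 1 # v" using assms by (metis atLeastAtMost_iff in_set_conv_decomp order_refl)
  then have "set u \<union> set v \<subseteq> {1..k} - {1}" using assms(1,2) by auto
  then have "\<forall>x\<in>set u. 2 \<le> x" "\<forall>x\<in>set v. 2 \<le> x" by fastforce+
  moreover have "\<tau> \<noteq> []" "\<forall>x\<in>set \<tau>. 1 \<le> x \<and> x \<le> length \<tau>" using assms(4-6) by auto
  ultimately show thesis using that uv by (simp add: inflation_def)
qed

lemma inflate_one_mem_A_set:
  assumes "\<sigma> \<in> A_set i" "\<tau> \<in> A_set j" "1 \<le> i" "1 \<le> j"
  shows "inflate_one \<sigma> \<tau> \<in> A_set (i + j - 1)"
proof -
  have \<sigma>: "distinct \<sigma>" "set \<sigma> = {1..i}" "avoids_patterns \<sigma>" and \<tau>: "distinct \<tau>" "set \<tau> = {1..j}" "avoids_patterns \<tau>"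
    using assms(1,2) unfolding mem_A_set_iff by auto
  obtain u v where uv: "\<sigma> = u @ 1 # v" and "inflation u v \<tau>"
    using inflation_of_perms \<sigma>(1,2) \<tau>(2) assms(3,4) length_of_perm[OF \<tau>(1,2)] by metis
  interpret inflation u v \<tau> by fact
  have "base = \<sigma>" "k = length \<sigma>" using uv unfolding base_def k_def by auto
  moreover have "length \<sigma> = i" "length \<tau> = j" using length_of_perm \<sigma>(1,2) \<tau>(1,2) by blast+
  ultimately have "base = \<sigma>" "k = i" "m = j" unfolding m_def by auto
  then show ?thesis
    using word_perm_iff word_avoids_patterns_iff \<sigma> \<tau> n_eq_k_m word_eq_inflate_one
    unfolding mem_A_set_iff by auto
qed

definition S_set :: "nat \<Rightarrow> nat list set" where
  "S_set n = {w \<in> A_set n. is_simple w}"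

context inflation
begin

lemma bottom_block_le_m:
  assumes "base \<in> S_set k" "bottom_block word j" "j < n"
  shows "j \<le> m"
  using proper_interval_of_bottom_block[of j] assms
  unfolding S_set_def mem_A_set_iff is_simple_iff by force

lemma p_eq_Least: "p = (LEAST y. word!y \<le> m)"
proof (rule Least_equality[symmetric])
  show "word!p \<le> m" using word_in_block[of p] m_pos by simp
  show "p \<le> y" if "word!y \<le> m" for y
    using word_le_m_iff[of y] that n_eq by (cases "y < n") auto
qed

lemma simple_base_of_maximal_block:
  assumes "distinct base" "set base = {1..k}" "avoids_patterns base"
    and maximal: "\<And>j. bottom_block word j \<Longrightarrow> j < length word \<Longrightarrow> j \<le> m"
  shows "is_simple base"
proof (rule simple_if_no_interval_around_one)
  show "distinct base" "set base = {1..length base}" "avoids_patterns base"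
    using assms by (simp_all add: length_base)
  show "\<nexists>a b. proper_interval base a b \<and> 1 \<in> (!) base ` {a..b}"
  proof
    assume "\<exists>a b. proper_interval base a b \<and> 1 \<in> (!) base ` {a..b}"
    then obtain a b where ab: "proper_interval base a b" "1 \<in> (!) base ` {a..b}" by blast
    obtain x where x: "1 = base!x" "x \<in> {a..b}" using ab(2) by (rule imageE)
    then have "x < k" using ab(1) unfolding proper_interval_def length_base by auto
    then have "x = p"
      using x(1) base_at_p assms(1) k_eq by (auto simp: nth_eq_iff_index_eq length_base)
    then show False
      using bottom_block_of_proper_interval[OF assms(1) ab(1)] x(2) maximal length_word by fastforce
  qed
qed

end

(* Simplicity of sigma makes m the largest bottom block below n, which fixes p and then the parts. *)
lemma inflate_one_inj:
  assumes 1: "\<sigma>1 \<in> S_set k1" "\<tau>1 \<in> A_set j1" "2 \<le> k1" "1 \<le> j1"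
    and 2: "\<sigma>2 \<in> S_set k2" "\<tau>2 \<in> A_set j2" "2 \<le> k2" "1 \<le> j2"
    and eq: "inflate_one \<sigma>1 \<tau>1 = inflate_one \<sigma>2 \<tau>2"
  shows "\<sigma>1 = \<sigma>2 \<and> \<tau>1 = \<tau>2"
proof -
  have perms: "distinct \<sigma>1" "set \<sigma>1 = {1..k1}" "distinct \<tau>1" "set \<tau>1 = {1..j1}"
    "distinct \<sigma>2" "set \<sigma>2 = {1..k2}" "distinct \<tau>2" "set \<tau>2 = {1..j2}"
    using 1 2 unfolding S_set_def mem_A_set_iff by auto
  have "1 \<le> k1" "1 \<le> k2" using 1(3) 2(3) by simp_all
  obtain u1 v1 where uv1: "\<sigma>1 = u1 @ 1 # v1" and "inflation u1 v1 \<tau>1"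
    using inflation_of_perms[OF perms(1,2) \<open>1 \<le> k1\<close> perms(4) 1(4) length_of_perm[OF perms(3,4)]] .
  interpret I1: inflation u1 v1 \<tau>1 by fact
  obtain u2 v2 where uv2: "\<sigma>2 = u2 @ 1 # v2" and "inflation u2 v2 \<tau>2"
    using inflation_of_perms[OF perms(5,6) \<open>1 \<le> k2\<close> perms(8) 2(4) length_of_perm[OF perms(7,8)]] .
  interpret I2: inflation u2 v2 \<tau>2 by fact
  have base: "I1.base = \<sigma>1" "I2.base = \<sigma>2" "I1.k = k1" "I2.k = k2"
    using uv1 uv2 length_of_perm[OF perms(1,2)] length_of_perm[OF perms(5,6)]
    unfolding I1.base_def I2.base_def I1.k_def I2.k_def by auto
  have word: "I1.word = I2.word" "I1.n = I2.n"
    using eq uv1 uv2 I1.word_eq_inflate_one I2.word_eq_inflate_one base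
    unfolding I1.n_def I2.n_def by auto
  have "I2.m \<le> I1.m"
    using I1.bottom_block_le_m[of I2.m] I2.bottom_block_m word base 1 2 I2.n_eq_k_m by simp
  moreover have "I1.m \<le> I2.m"
    using I2.bottom_block_le_m[of I1.m] I1.bottom_block_m word base 1 2 I1.n_eq_k_m by simp
  ultimately have "I1.m = I2.m" by simp
  then have "I1.p = I2.p" using I1.p_eq_Least I2.p_eq_Least word by simp
  have "(\<sigma>1, \<tau>1) = deflate I1.word I1.p I1.m" using I1.deflate_word base by simp
  also have "\<dots> = deflate I2.word I2.p I2.m" using word \<open>I1.m = I2.m\<close> \<open>I1.p = I2.p\<close> by simp
  also have "\<dots> = (\<sigma>2, \<tau>2)" using I2.deflate_word base by simp
  finally show ?thesis by simp
qed

lemma inflate_one_surj: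
  assumes w: "w \<in> A_set n" and n: "2 \<le> n"
  obtains k \<sigma> \<tau> where "k \<in> {2..n}" "\<sigma> \<in> S_set k" "\<tau> \<in> A_set (n + 1 - k)" "w = inflate_one \<sigma> \<tau>"
proof -
  have perm: "distinct w" "set w = {1..length w}" "avoids_patterns w" "length w = n"
    using w length_of_perm unfolding mem_A_set_iff by auto
  define M where "M = {j. 1 \<le> j \<and> j < n \<and> bottom_block w j}"
  have "finite M" unfolding M_def by (rule finite_subset[of _ "{..<n}"]) auto
  moreover have "1 \<in> M" using bottom_block_1[OF perm(1,2)] perm(4) n unfolding M_def by auto
  ultimately have "Max M \<in> M" and maximal: "\<And>j. j \<in> M \<Longrightarrow> j \<le> Max M"
    using Max_in[of M] Max_ge[of M] by blast+
  then obtain u v t where "inflation u v t" "inflation.word u v t = w" "length t = Max M"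
    using inflation_of_bottom_block[OF perm(1,2)] perm(4) unfolding M_def by blast
  interpret inflation u v t by fact
  have w_eq: "word = w" "m = Max M" using \<open>word = w\<close> \<open>length t = Max M\<close> by (simp_all add: m_def)
  then have len: "length w = length word" by simp
  have "1 \<le> m" "m < length w" using \<open>Max M \<in> M\<close> w_eq perm(4) unfolding M_def by auto
  then have k: "k \<in> {2..length w}" "length w + 1 - k = m" using n_eq_k_m len length_word by auto
  have "distinct word" "set word = {1..length word}" "avoids_patterns word" using perm w_eq by simp_all
  then have parts: "distinct base" "set base = {1..k}" "avoids_patterns base"
    "distinct t" "set t = {1..m}" "avoids_patterns t"
    using word_perm_iff word_avoids_patterns_iff unfolding length_word by blast+
  have "j \<le> m" if "bottom_block word j" "j < length word" for j
    using maximal[of j] that w_eq perm(4) unfolding M_def by (cases "j = 0") auto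
  then have "is_simple base" using simple_base_of_maximal_block parts by blast
  then have "base \<in> S_set k" "t \<in> A_set (length w + 1 - k)"
    using parts k unfolding S_set_def mem_A_set_iff by auto
  then show thesis using that k word_eq_inflate_one w_eq perm(4) by auto
qed

definition decompositions :: "nat \<Rightarrow> (nat list \<times> nat list) set" where
  "decompositions n = (\<Union>k\<in>{2..n}. S_set k \<times> A_set (n + 1 - k))"

lemma inflate_one_bij:
  assumes "2 \<le> n"
  shows "bij_betw (\<lambda>(\<sigma>, \<tau>). inflate_one \<sigma> \<tau>) (decompositions n) (A_set n)"
  unfolding bij_betw_def
proof (intro conjI inj_onI equalityI subsetI)
  fix x y
  assume "x \<in> decompositions n" "y \<in> decompositions n"
    and "(\<lambda>(\<sigma>, \<tau>). inflate_one \<sigma> \<tau>) x = (\<lambda>(\<sigma>, \<tau>). inflate_one \<sigma> \<tau>) y"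
  then obtain k1 k2 where "k1 \<in> {2..n}" "fst x \<in> S_set k1" "snd x \<in> A_set (n + 1 - k1)"
    "k2 \<in> {2..n}" "fst y \<in> S_set k2" "snd y \<in> A_set (n + 1 - k2)"
    and "inflate_one (fst x) (snd x) = inflate_one (fst y) (snd y)"
    by (auto simp: case_prod_beta decompositions_def)
  then have "fst x = fst y \<and> snd x = snd y" by (intro inflate_one_inj) auto
  then show "x = y" by (simp add: prod_eq_iff)
next
  fix w assume "w \<in> (\<lambda>(\<sigma>, \<tau>). inflate_one \<sigma> \<tau>) ` decompositions n"
  then obtain k \<sigma> \<tau> where "k \<in> {2..n}" "\<sigma> \<in> S_set k" "\<tau> \<in> A_set (n + 1 - k)" "w = inflate_one \<sigma> \<tau>"
    by (auto simp: decompositions_def)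
  then show "w \<in> A_set n" using inflate_one_mem_A_set[of \<sigma> k \<tau> "n + 1 - k"] by (auto simp: S_set_def)
next
  fix w assume "w \<in> A_set n"
  then show "w \<in> (\<lambda>(\<sigma>, \<tau>). inflate_one \<sigma> \<tau>) ` decompositions n"
  proof (rule inflate_one_surj[OF _ assms])
    fix k \<sigma> \<tau> assume "k \<in> {2..n}" "\<sigma> \<in> S_set k" "\<tau> \<in> A_set (n + 1 - k)" "w = inflate_one \<sigma> \<tau>"
    then show ?thesis by (intro image_eqI[of _ _ "(\<sigma>, \<tau>)"]) (auto simp: decompositions_def)
  qed
qed

lemma a_seq_recurrence:
  assumes "2 \<le> n"
  shows "a_seq n = (\<Sum>k=2..n. s_seq k * a_seq (n + 1 - k))"
proof -
  have "a_seq n = card (\<Union>k\<in>{2..n}. S_set k \<times> A_set (n + 1 - k))"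
    unfolding a_seq_def using bij_betw_same_card[OF inflate_one_bij[OF assms]]
    by (simp add: decompositions_def)
  also have "\<dots> = (\<Sum>k=2..n. card (S_set k \<times> A_set (n + 1 - k)))"
  proof (rule card_UN_disjoint)
    show "\<forall>k\<in>{2..n}. finite (S_set k \<times> A_set (n + 1 - k))"
      by (simp add: S_set_def A_set_def)
    show "\<forall>i\<in>{2..n}. \<forall>j\<in>{2..n}. i \<noteq> j \<longrightarrow>
        (S_set i \<times> A_set (n + 1 - i)) \<inter> (S_set j \<times> A_set (n + 1 - j)) = {}"
      unfolding S_set_def mem_A_set_iff using length_of_perm by blast
  qed simp
  also have "\<dots> = (\<Sum>k=2..n. s_seq k * a_seq (n + 1 - k))"
    by (simp add: card_cartesian_product s_seq_def a_seq_def S_set_def)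
  finally show ?thesis .
qed

section \<open>Compositions\<close>

(* Unlike compositions, this contains the empty composition of 0. *)
definition all_compositions :: "nat \<Rightarrow> nat list set" where
  "all_compositions j = {xs. (\<forall>x\<in>set xs. 1 \<le> x) \<and> sum_list xs = j}"

definition composition_sum :: "(nat \<Rightarrow> 'a::comm_semiring_1) \<Rightarrow> nat \<Rightarrow> 'a" where
  "composition_sum f j = (\<Sum>xs\<in>all_compositions j. \<Prod>x\<leftarrow>xs. f x)"

lemma finite_all_compositions: "finite (all_compositions j)"
proof (rule finite_subset)
  have "length xs \<le> sum_list xs" if "\<forall>x\<in>set xs. 1 \<le> x" for xs :: "nat list"
    using that by (induction xs) auto
  moreover have "x \<le> sum_list xs" if "x \<in> set xs" for x and xs :: "nat list"
    using that by (induction xs) auto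
  ultimately show "all_compositions j \<subseteq> {xs. set xs \<subseteq> {1..j} \<and> length xs \<le> j}"
    unfolding all_compositions_def by fastforce
  show "finite {xs. set xs \<subseteq> {1..j} \<and> length xs \<le> j}" by (rule finite_lists_length_le) simp
qed

lemma all_compositions_0: "all_compositions 0 = {[]}"
proof (intro equalityI subsetI)
  fix xs assume "xs \<in> all_compositions 0"
  then show "xs \<in> {[]}" unfolding all_compositions_def by (cases xs) auto
qed (simp add: all_compositions_def)

lemma all_compositions_Cons:
  assumes "1 \<le> j"
  shows "all_compositions j = (\<Union>x\<in>{1..j}. (#) x ` all_compositions (j - x))"
proof (intro equalityI subsetI)
  fix xs assume xs: "xs \<in> all_compositions j"
  then obtain x ys where "xs = x # ys" using assms unfolding all_compositions_def by (cases xs) auto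
  then show "xs \<in> (\<Union>x\<in>{1..j}. (#) x ` all_compositions (j - x))"
    using xs unfolding all_compositions_def by (intro UN_I[of x]) auto
qed (auto simp: all_compositions_def)

lemma composition_sum_0: "composition_sum f 0 = 1"
  unfolding composition_sum_def all_compositions_0 by simp

lemma composition_sum_rec:
  assumes "1 \<le> j"
  shows "composition_sum f j = (\<Sum>x=1..j. f x * composition_sum f (j - x))"
proof -
  have "composition_sum f j = (\<Sum>x=1..j. \<Sum>xs\<in>(#) x ` all_compositions (j - x). \<Prod>y\<leftarrow>xs. f y)"
    unfolding composition_sum_def all_compositions_Cons[OF assms]
    by (rule sum.UNION_disjoint) (auto simp: finite_all_compositions)
  also have "\<dots> = (\<Sum>x=1..j. f x * composition_sum f (j - x))"
    by (intro sum.cong refl, subst sum.reindex) (auto simp: composition_sum_def sum_distrib_left)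
  finally show ?thesis .
qed

lemma a_seq_1: "a_seq 1 = 1"
proof -
  have "A_set 1 = {[1]}"
    unfolding A_set_def avoids_all_iff_avoids_patterns
    by (auto simp: avoids_patterns_def avoids_quad_def avoids_231_end_def avoids_132_start_def)
  then show ?thesis unfolding a_seq_def by simp
qed

lemma a_seq_eq_composition_sum: "1 \<le> n \<Longrightarrow> a_seq n = composition_sum (\<lambda>x. s_seq (x + 1)) (n - 1)"
proof (induction n rule: less_induct)
  case (less n)
  show ?case
  proof (cases "n = 1")
    case True
    then show ?thesis using a_seq_1 composition_sum_0[of "\<lambda>x. s_seq (x + 1)"] by simp
  next
    case False
    then have "2 \<le> n" using less.prems by simp
    have "a_seq n = (\<Sum>k=2..n. s_seq k * a_seq (n + 1 - k))" by (rule a_seq_recurrence[OF \<open>2 \<le> n\<close>])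
    also have "\<dots> = (\<Sum>x=1..n-1. s_seq (x + 1) * a_seq (n - x))"
      using \<open>2 \<le> n\<close> by (intro sum.reindex_bij_witness[of _ "\<lambda>x. x + 1" "\<lambda>k. k - 1"]) auto
    also have "\<dots> = (\<Sum>x=1..n-1. s_seq (x + 1) * composition_sum (\<lambda>x. s_seq (x + 1)) (n - 1 - x))"
      using less.IH by (intro sum.cong) auto
    also have "\<dots> = composition_sum (\<lambda>x. s_seq (x + 1)) (n - 1)"
      using composition_sum_rec[where f = "\<lambda>x. s_seq (x + 1)" and j = "n - 1"] \<open>2 \<le> n\<close> by simp
    finally show ?thesis .
  qed
qed

theorem mainTheorem16:
  fixes n :: nat
  assumes "n \<ge> 2"
  shows "a_seq n = (\<Sum>xs\<in>compositions (n - 1). \<Prod>x\<leftarrow>xs. s_seq (x + 1))"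
proof -
  have "compositions (n - 1) = all_compositions (n - 1)"
    unfolding compositions_def all_compositions_def using assms by auto
  then show ?thesis using a_seq_eq_composition_sum[of n] assms unfolding composition_sum_def by simp
qed

end
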